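(* Let $m,n>2$ be integers and $\Gamma={\rm SR}(m,n)$. If $n>3$, then the automorphism group of $\Gamma$ is the group ${\rm Sym}(m)$ acting by permuting coordinate positions. If $n=3$, then ${\rm Aut}(\Gamma)\cong{\rm Sym}(m).2$, namely it is generated by the coordinate permutations together with the involution that interchanges the digits $1$ and $2$ in each vertex having a coordinate equal to $2$ (i.e. maps $2e_i+e_j$ to $e_i+2e_j$ and fixes all other vertices), and it has order $2\cdot m!$.
   Context: ${\rm SR}(m,n)$ is the graph whose vertices are the vectors in $\{0,1,2,\dots\}^m$ with coordinate sum $n$, two vertices being adjacent when they differ in precisely two coordinate positions. $e_i$ denotes the $i$-th standard unit vector. *)

theory Defs
  imports Main "HOL-Algebra.Bij" "HOL-Algebra.Generated_Groups" "HOL-Combinatorics.Permutations"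
begin

text \<open>Vertices of SR(m,n): vectors in {0,1,2,...}^m (coordinates indexed by 0..m-1,
  represented as functions nat => nat vanishing from m on) with coordinate sum n.\<close>
definition SR_verts :: "nat \<Rightarrow> nat \<Rightarrow> (nat \<Rightarrow> nat) set" where
  "SR_verts m n = {x. (\<forall>i\<ge>m. x i = 0) \<and> (\<Sum>i<m. x i) = n}"

definition SR_adj :: "nat \<Rightarrow> (nat \<Rightarrow> nat) \<Rightarrow> (nat \<Rightarrow> nat) \<Rightarrow> bool" where
  "SR_adj m x y \<longleftrightarrow> card {i. i < m \<and> x i \<noteq> y i} = 2"

definition SR_Aut :: "nat \<Rightarrow> nat \<Rightarrow> ((nat \<Rightarrow> nat) \<Rightarrow> (nat \<Rightarrow> nat)) set" where
  "SR_Aut m n = {f \<in> Bij (SR_verts m n).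
     \<forall>x\<in>SR_verts m n. \<forall>y\<in>SR_verts m n. SR_adj m (f x) (f y) \<longleftrightarrow> SR_adj m x y}"

definition coord_perm :: "nat \<Rightarrow> nat \<Rightarrow> (nat \<Rightarrow> nat) \<Rightarrow> ((nat \<Rightarrow> nat) \<Rightarrow> (nat \<Rightarrow> nat))" where
  "coord_perm m n \<sigma> = (\<lambda>x\<in>SR_verts m n. (\<lambda>i. x (inv_into UNIV \<sigma> i)))"

definition coord_perms :: "nat \<Rightarrow> nat \<Rightarrow> ((nat \<Rightarrow> nat) \<Rightarrow> (nat \<Rightarrow> nat)) set" where
  "coord_perms m n = {coord_perm m n \<sigma> | \<sigma>. \<sigma> permutes {..<m}}"

definition swap12 :: "nat \<Rightarrow> nat \<Rightarrow> ((nat \<Rightarrow> nat) \<Rightarrow> (nat \<Rightarrow> nat))" where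
  "swap12 m n = (\<lambda>x\<in>SR_verts m n.
     if (\<exists>i. x i = 2) then (\<lambda>k. if x k = 1 then 2 else if x k = 2 then 1 else x k) else x)"

end

theory Submission
  imports Defs
begin

text \<open>An automorphism preserves the corners \<open>n e\<^sub>i\<close>, since they are the only vertices \<open>x\<close> such that
  any two distinct non-adjacent neighbours of \<open>x\<close> have exactly two common neighbours adjacent
  to \<open>x\<close>. After composing with a coordinate permutation we may assume that all corners are fixed.
  Then every line \<open>{u e\<^sub>i + (n - u) e\<^sub>j}\<close> is mapped into itself, by a permutation \<open>\<phi>\<close> of
  \<open>{1..n-1}\<close> that does not depend on \<open>i, j\<close>. The neighbourhood of \<open>a e\<^sub>0 + b e\<^sub>1 + c e\<^sub>2\<close>
  forces \<open>\<phi> a + \<phi> b \<le> \<phi> (a + b)\<close> whenever \<open>b \<noteq> c\<close>, so \<open>\<phi>\<close> is the identity if \<open>n > 3\<close>;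
  for \<open>n = 3\<close> it may also be the transposition realised by \<open>swap12\<close>. Finally, an
  automorphism fixing all these lines fixes every vertex, by induction on \<open>n - x\<^sub>0\<close>.\<close>

lemma sum_lessThan_remove2:
  fixes x :: "nat \<Rightarrow> nat"
  assumes "a < m" "b < m" "a \<noteq> b"
  shows "(\<Sum>i<m. x i) = x a + x b + (\<Sum>i\<in>{..<m} - {a,b}. x i)"
proof -
  have "(\<Sum>i<m. x i) = x a + (\<Sum>i\<in>{..<m} - {a}. x i)"
    using assms by (simp add: sum.remove)
  also have "(\<Sum>i\<in>{..<m} - {a}. x i) = x b + (\<Sum>i\<in>{..<m} - {a} - {b}. x i)"
    using assms by (subst sum.remove[of _ b]) auto
  finally show ?thesis by (simp add: insert_commute set_diff_eq)
qed

lemma mem_SR_verts: "x \<in> SR_verts m n \<longleftrightarrow> (\<forall>i\<ge>m. x i = 0) \<and> (\<Sum>i<m. x i) = n"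
  by (simp add: SR_verts_def)

lemma SR_verts_eqI:
  assumes "x \<in> SR_verts m n" "y \<in> SR_verts m n" "\<And>i. i < m \<Longrightarrow> x i = y i"
  shows "x = y"
proof
  fix i show "x i = y i" using assms by (cases "i < m") (auto simp: mem_SR_verts)
qed

lemma SR_verts_le:
  assumes "x \<in> SR_verts m n"
  shows "x i \<le> n"
proof (cases "i < m")
  case True
  then have "x i \<le> (\<Sum>t<m. x t)" by (intro member_le_sum) auto
  then show ?thesis using assms by (simp add: mem_SR_verts)
qed (use assms in \<open>simp add: mem_SR_verts\<close>)

lemma SR_verts_pair_le:
  assumes "x \<in> SR_verts m n" "a < m" "b < m" "a \<noteq> b"
  shows "x a + x b \<le> n"
  using sum_lessThan_remove2[OF assms(2-4), of x] assms(1) by (simp add: mem_SR_verts)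

lemma SR_verts_triple_le:
  assumes "x \<in> SR_verts m n" "a < m" "b < m" "c < m" "a \<noteq> b" "a \<noteq> c" "b \<noteq> c"
  shows "x a + x b + x c \<le> n"
proof -
  have "(\<Sum>i\<in>{a,b,c}. x i) \<le> (\<Sum>i<m. x i)" using assms(2-4) by (intro sum_mono2) auto
  then show ?thesis using assms by (simp add: mem_SR_verts)
qed

lemma SR_verts_pair_sum_eq:
  assumes "x \<in> SR_verts m n" "y \<in> SR_verts m n" "a < m" "b < m" "a \<noteq> b"
    "\<And>i. i < m \<Longrightarrow> i \<noteq> a \<Longrightarrow> i \<noteq> b \<Longrightarrow> x i = y i"
  shows "x a + x b = y a + y b"
proof -
  have "(\<Sum>i\<in>{..<m} - {a,b}. x i) = (\<Sum>i\<in>{..<m} - {a,b}. y i)"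
    using assms(6) by (intro sum.cong) auto
  then show ?thesis
    using assms(1,2) sum_lessThan_remove2[OF assms(3-5), of x] sum_lessThan_remove2[OF assms(3-5), of y]
    by (simp add: mem_SR_verts)
qed

lemma SR_verts_upd2:
  assumes "x \<in> SR_verts m n" "a < m" "b < m" "a \<noteq> b" "x a + x b = a' + b'"
  shows "x(a := a', b := b') \<in> SR_verts m n"
proof -
  let ?y = "x(a := a', b := b')"
  have "(\<Sum>i\<in>{..<m} - {a,b}. ?y i) = (\<Sum>i\<in>{..<m} - {a,b}. x i)"
    by (intro sum.cong) auto
  then show ?thesis
    using assms sum_lessThan_remove2[OF assms(2-4), of x] sum_lessThan_remove2[OF assms(2-4), of ?y]
    by (auto simp add: mem_SR_verts)
qed

lemma SR_adj_iff:
  "SR_adj m x y \<longleftrightarrow> (\<exists>a b. a < m \<and> b < m \<and> a \<noteq> b \<and> x a \<noteq> y a \<and> x b \<noteq> y b \<and>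
     (\<forall>i<m. i \<noteq> a \<longrightarrow> i \<noteq> b \<longrightarrow> x i = y i))" (is "?L \<longleftrightarrow> ?R")
proof
  assume ?L
  then obtain a b where ab: "{i. i < m \<and> x i \<noteq> y i} = {a,b}" "a \<noteq> b"
    unfolding SR_adj_def card_2_iff by blast
  have "a < m \<and> x a \<noteq> y a" "b < m \<and> x b \<noteq> y b" using ab(1) by blast+
  moreover have "\<forall>i<m. i \<noteq> a \<longrightarrow> i \<noteq> b \<longrightarrow> x i = y i" using ab(1) by blast
  ultimately show ?R using ab(2) by blast
next
  assume ?R
  then obtain a b where "a < m" "b < m" "a \<noteq> b" "x a \<noteq> y a" "x b \<noteq> y b"
     "\<forall>i<m. i \<noteq> a \<longrightarrow> i \<noteq> b \<longrightarrow> x i = y i" by blast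
  then have "{i. i < m \<and> x i \<noteq> y i} = {a,b}" by auto
  then show ?L using \<open>a \<noteq> b\<close> unfolding SR_adj_def by simp
qed

lemma SR_adjI:
  "a < m \<Longrightarrow> b < m \<Longrightarrow> a \<noteq> b \<Longrightarrow> x a \<noteq> y a \<Longrightarrow> x b \<noteq> y b \<Longrightarrow>
   (\<And>i. i < m \<Longrightarrow> i \<noteq> a \<Longrightarrow> i \<noteq> b \<Longrightarrow> x i = y i) \<Longrightarrow> SR_adj m x y"
  unfolding SR_adj_iff by blast

lemma SR_adjE:
  assumes "SR_adj m x y"
  obtains a b where "a < m" "b < m" "a \<noteq> b" "x a \<noteq> y a" "x b \<noteq> y b"
     "\<And>i. i < m \<Longrightarrow> i \<noteq> a \<Longrightarrow> i \<noteq> b \<Longrightarrow> x i = y i"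
  using assms unfolding SR_adj_iff by blast

lemma SR_adj_other_diff:
  assumes "SR_adj m x w" "p < m" "x p \<noteq> w p"
  obtains b where "b < m" "b \<noteq> p" "x b \<noteq> w b" "\<forall>t<m. t \<noteq> p \<longrightarrow> t \<noteq> b \<longrightarrow> x t = w t"
  using assms(1)
proof (rule SR_adjE)
  fix a b assume h: "a < m" "b < m" "a \<noteq> b" "x a \<noteq> w a" "x b \<noteq> w b"
     "\<And>i. i < m \<Longrightarrow> i \<noteq> a \<Longrightarrow> i \<noteq> b \<Longrightarrow> x i = w i"
  have "p = a \<or> p = b" using h(6) assms(2,3) by blast
  then show thesis
  proof
    assume "p = a" then show thesis using that[of b] h by blast
  next
    assume "p = b" then show thesis using that[of a] h by blast
  qed
qed

lemma SR_adj_no_three_diffs: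
  assumes "SR_adj m x y" "a < m" "b < m" "c < m" "a \<noteq> b" "a \<noteq> c" "b \<noteq> c"
    "x a \<noteq> y a" "x b \<noteq> y b" "x c \<noteq> y c"
  shows False
  using assms(1)
proof (rule SR_adjE)
  fix p q assume "p < m" "q < m" "p \<noteq> q" "x p \<noteq> y p" "x q \<noteq> y q"
    and same: "\<And>i. i < m \<Longrightarrow> i \<noteq> p \<Longrightarrow> i \<noteq> q \<Longrightarrow> x i = y i"
  have "a = p \<or> a = q" "b = p \<or> b = q" "c = p \<or> c = q" using same assms(2-4,8-10) by blast+
  then show False using assms(5-7) by auto
qed

lemma SR_adj_sym: "SR_adj m x y \<Longrightarrow> SR_adj m y x"
proof -
  have "{i. i < m \<and> y i \<noteq> x i} = {i. i < m \<and> x i \<noteq> y i}" by auto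
  then show "SR_adj m x y \<Longrightarrow> SR_adj m y x" unfolding SR_adj_def by simp
qed

lemma SR_adj_imp_neq: "SR_adj m x y \<Longrightarrow> x \<noteq> y"
  by (erule SR_adjE) auto

lemma SR_adj_permute:
  assumes t: "\<tau> permutes {..<m}"
  shows "SR_adj m (\<lambda>i. x (\<tau> i)) (\<lambda>i. y (\<tau> i)) \<longleftrightarrow> SR_adj m x y"
proof -
  let ?A = "{i. i < m \<and> x (\<tau> i) \<noteq> y (\<tau> i)}"
  let ?B = "{i. i < m \<and> x i \<noteq> y i}"
  have "\<tau> ` ?A = ?B"
  proof (intro equalityI subsetI)
    fix j assume "j \<in> \<tau> ` ?A"
    then show "j \<in> ?B" using permutes_in_image[OF t] by auto
  next
    fix j assume j: "j \<in> ?B"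
    have "inv_into UNIV \<tau> j \<in> ?A"
      using j permutes_in_image[OF permutes_inv[OF t]] permutes_inverses(1)[OF t] by auto
    moreover have "j = \<tau> (inv_into UNIV \<tau> j)" using permutes_inverses(1)[OF t] by simp
    ultimately show "j \<in> \<tau> ` ?A" by blast
  qed
  moreover have "inj_on \<tau> ?A" using permutes_inj[OF t] by (simp add: inj_on_def inj_def)
  ultimately have "card ?A = card ?B" using card_image by fastforce
  then show ?thesis unfolding SR_adj_def by simp
qed

lemma SR_Aut_bij_betw: "f \<in> SR_Aut m n \<Longrightarrow> bij_betw f (SR_verts m n) (SR_verts m n)"
  by (simp add: SR_Aut_def Bij_def)

lemma SR_Aut_in_SR_verts: "f \<in> SR_Aut m n \<Longrightarrow> x \<in> SR_verts m n \<Longrightarrow> f x \<in> SR_verts m n"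
  using SR_Aut_bij_betw bij_betwE by blast

lemma SR_Aut_adj_iff:
  "f \<in> SR_Aut m n \<Longrightarrow> x \<in> SR_verts m n \<Longrightarrow> y \<in> SR_verts m n \<Longrightarrow>
   SR_adj m (f x) (f y) \<longleftrightarrow> SR_adj m x y"
  by (simp add: SR_Aut_def)

lemma SR_Aut_eq_iff:
  "f \<in> SR_Aut m n \<Longrightarrow> x \<in> SR_verts m n \<Longrightarrow> y \<in> SR_verts m n \<Longrightarrow> f x = f y \<longleftrightarrow> x = y"
  using SR_Aut_bij_betw by (metis bij_betw_iff_bijections)

lemma SR_Aut_surj: "f \<in> SR_Aut m n \<Longrightarrow> y \<in> SR_verts m n \<Longrightarrow> \<exists>x\<in>SR_verts m n. y = f x"
  using SR_Aut_bij_betw by (metis bij_betw_iff_bijections)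

lemma SR_Aut_extensional: "f \<in> SR_Aut m n \<Longrightarrow> f \<in> extensional (SR_verts m n)"
  by (simp add: SR_Aut_def Bij_def)

lemma SR_Aut_compose:
  assumes f: "f \<in> SR_Aut m n" and h: "h \<in> SR_Aut m n"
  shows "compose (SR_verts m n) f h \<in> SR_Aut m n"
proof -
  have "compose (SR_verts m n) f h \<in> Bij (SR_verts m n)"
    using f h by (intro compose_Bij) (auto simp: SR_Aut_def)
  then show ?thesis
    using SR_Aut_adj_iff[OF f] SR_Aut_adj_iff[OF h] SR_Aut_in_SR_verts[OF h]
    by (simp add: SR_Aut_def compose_def)
qed

lemma SR_Aut_inv:
  assumes f: "f \<in> SR_Aut m n"
  shows "restrict (inv_into (SR_verts m n) f) (SR_verts m n) \<in> SR_Aut m n"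
proof -
  let ?h = "restrict (inv_into (SR_verts m n) f) (SR_verts m n)"
  have B: "?h \<in> Bij (SR_verts m n)" using f by (intro restrict_inv_into_Bij) (simp add: SR_Aut_def)
  then have hV: "\<And>x. x \<in> SR_verts m n \<Longrightarrow> ?h x \<in> SR_verts m n" using Bij_imp_funcset by blast
  have fh: "\<And>x. x \<in> SR_verts m n \<Longrightarrow> f (?h x) = x"
    using SR_Aut_bij_betw[OF f] by (simp add: bij_betw_inv_into_right)
  have "SR_adj m (?h x) (?h y) \<longleftrightarrow> SR_adj m x y" if "x \<in> SR_verts m n" "y \<in> SR_verts m n" for x y
    using SR_Aut_adj_iff[OF f hV hV, of x y] fh that by simp
  then show ?thesis using B by (simp add: SR_Aut_def)
qed

lemma SR_Aut_subgroup: "subgroup (SR_Aut m n) (BijGroup (SR_verts m n))"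
proof (rule subgroup.intro)
  show "SR_Aut m n \<subseteq> carrier (BijGroup (SR_verts m n))" by (auto simp: SR_Aut_def BijGroup_def)
next
  fix x y assume "x \<in> SR_Aut m n" "y \<in> SR_Aut m n"
  then show "x \<otimes>\<^bsub>BijGroup (SR_verts m n)\<^esub> y \<in> SR_Aut m n"
    using SR_Aut_compose by (auto simp: SR_Aut_def BijGroup_def)
next
  show "\<one>\<^bsub>BijGroup (SR_verts m n)\<^esub> \<in> SR_Aut m n" by (simp add: SR_Aut_def BijGroup_def id_Bij)
next
  fix x assume "x \<in> SR_Aut m n"
  then show "inv\<^bsub>BijGroup (SR_verts m n)\<^esub> x \<in> SR_Aut m n"
    using SR_Aut_inv by (simp add: SR_Aut_def inv_BijGroup)
qed

lemma coord_perm_apply: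
  "x \<in> SR_verts m n \<Longrightarrow> coord_perm m n \<sigma> x = (\<lambda>i. x (inv_into UNIV \<sigma> i))"
  by (simp add: coord_perm_def)

lemma coord_perm_in_SR_verts:
  assumes s: "\<sigma> permutes {..<m}" and x: "x \<in> SR_verts m n"
  shows "coord_perm m n \<sigma> x \<in> SR_verts m n"
proof -
  have si: "inv_into UNIV \<sigma> permutes {..<m}" using permutes_inv[OF s] .
  have "(\<Sum>i<m. x i) = (\<Sum>i<m. (x \<circ> inv_into UNIV \<sigma>) i)" using sum.permute[OF si, of x] by simp
  then show ?thesis
    using permutes_not_in[OF si] x by (simp add: coord_perm_apply[OF x] mem_SR_verts)
qed

lemma coord_perm_comp:
  assumes s: "\<sigma> permutes {..<m}" and t: "\<tau> permutes {..<m}" and x: "x \<in> SR_verts m n"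
  shows "coord_perm m n \<sigma> (coord_perm m n \<tau> x) = coord_perm m n (\<sigma> \<circ> \<tau>) x"
proof -
  have "coord_perm m n \<sigma> (coord_perm m n \<tau> x) = (\<lambda>i. coord_perm m n \<tau> x (inv_into UNIV \<sigma> i))"
    by (rule coord_perm_apply[OF coord_perm_in_SR_verts[OF t x]])
  also have "\<dots> = (\<lambda>i. x (inv_into UNIV \<tau> (inv_into UNIV \<sigma> i)))" by (simp add: coord_perm_apply[OF x])
  also have "\<dots> = coord_perm m n (\<sigma> \<circ> \<tau>) x"
    using permutes_bij[OF s] permutes_bij[OF t] by (simp add: coord_perm_apply[OF x] o_inv_distrib)
  finally show ?thesis .
qed

lemma coord_perm_inv:
  assumes s: "\<sigma> permutes {..<m}" and x: "x \<in> SR_verts m n"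
  shows "coord_perm m n (inv_into UNIV \<sigma>) (coord_perm m n \<sigma> x) = x"
    and "coord_perm m n \<sigma> (coord_perm m n (inv_into UNIV \<sigma>) x) = x"
  using coord_perm_comp[OF permutes_inv[OF s] s x] coord_perm_comp[OF s permutes_inv[OF s] x]
    permutes_inv_o[OF s] by (simp_all add: coord_perm_apply[OF x])

lemma coord_perm_in_SR_Aut:
  assumes s: "\<sigma> permutes {..<m}"
  shows "coord_perm m n \<sigma> \<in> SR_Aut m n"
proof -
  have si: "inv_into UNIV \<sigma> permutes {..<m}" using permutes_inv[OF s] .
  have "bij_betw (coord_perm m n \<sigma>) (SR_verts m n) (SR_verts m n)"
    by (rule bij_betw_byWitness[where f'="coord_perm m n (inv_into UNIV \<sigma>)"])
       (use coord_perm_inv[OF s] coord_perm_in_SR_verts[OF s] coord_perm_in_SR_verts[OF si] in auto)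
  then show ?thesis
    using SR_adj_permute[OF si]
    by (simp add: SR_Aut_def Bij_def coord_perm_apply) (simp add: coord_perm_def)
qed

lemma coord_perms_subset_SR_Aut: "coord_perms m n \<subseteq> SR_Aut m n"
  using coord_perm_in_SR_Aut by (auto simp: coord_perms_def)

lemma coord_perms_eq_image: "coord_perms m n = coord_perm m n ` {\<sigma>. \<sigma> permutes {..<m}}"
  by (auto simp: coord_perms_def)

lemma finite_coord_perms: "finite (coord_perms m n)"
  unfolding coord_perms_eq_image by (intro finite_imageI finite_permutations) simp

locale SR_graph =
  fixes m n :: nat
  assumes m_gt_2: "2 < m" and n_gt_2: "2 < n"
begin

abbreviation "V \<equiv> SR_verts m n"
abbreviation "adj \<equiv> SR_adj m"

definition corner :: "nat \<Rightarrow> nat \<Rightarrow> nat" where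
  "corner i = (\<lambda>k. if k = i then n else 0)"

definition pair_vert :: "nat \<Rightarrow> nat \<Rightarrow> nat \<Rightarrow> nat \<Rightarrow> nat" where
  "pair_vert i j u = (\<lambda>k. if k = i then u else if k = j then n - u else 0)"

lemma corner_in_V: "i < m \<Longrightarrow> corner i \<in> V"
  by (simp add: mem_SR_verts corner_def)

lemma corner_inj: "corner i = corner j \<Longrightarrow> i = j"
  using n_gt_2 unfolding corner_def by (metis (mono_tags) less_nat_zero_code zero_less_iff_neq_zero)

lemma pair_vert_in_V:
  assumes "i < m" "j < m" "i \<noteq> j" "u \<le> n"
  shows "pair_vert i j u \<in> V"
proof -
  have "pair_vert i j u = (corner i)(i := u, j := n - u)"
    using assms(3) by (auto simp: pair_vert_def corner_def)
  also have "\<dots> \<in> V"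
    by (rule SR_verts_upd2[OF corner_in_V]) (use assms in \<open>auto simp: corner_def\<close>)
  finally show ?thesis .
qed

lemma pair_vert_eq_iff: "i \<noteq> j \<Longrightarrow> pair_vert i j u = pair_vert i j v \<longleftrightarrow> u = v"
  by (metis pair_vert_def)

lemma pair_vert_swap: "i \<noteq> j \<Longrightarrow> u \<le> n \<Longrightarrow> pair_vert j i (n - u) = pair_vert i j u"
  by (auto simp: pair_vert_def)

lemma pair_vert_n: "pair_vert i j n = corner i"
  by (auto simp: pair_vert_def corner_def)

lemma pair_vert_0: "i \<noteq> j \<Longrightarrow> pair_vert i j 0 = corner j"
  by (auto simp: pair_vert_def corner_def)

lemma pair_vert_neq_corner:
  "i \<noteq> j \<Longrightarrow> 0 < u \<Longrightarrow> u < n \<Longrightarrow> pair_vert i j u \<noteq> corner k"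
  by (auto simp: pair_vert_def corner_def fun_eq_iff split: if_splits)

lemma adj_corner_pair_vert_fst:
  "i < m \<Longrightarrow> j < m \<Longrightarrow> i \<noteq> j \<Longrightarrow> u < n \<Longrightarrow> adj (corner i) (pair_vert i j u)"
  by (rule SR_adjI[where a=i and b=j]) (auto simp: pair_vert_def corner_def)

lemma adj_corner_pair_vert_snd:
  "i < m \<Longrightarrow> j < m \<Longrightarrow> i \<noteq> j \<Longrightarrow> 0 < u \<Longrightarrow> u \<le> n \<Longrightarrow> adj (corner j) (pair_vert i j u)"
  by (rule SR_adjI[where a=i and b=j]) (auto simp: pair_vert_def corner_def)

lemma ex_third: "a < m \<Longrightarrow> b < m \<Longrightarrow> \<exists>k<m. k \<noteq> a \<and> k \<noteq> b"
  using m_gt_2 by (metis One_nat_def less_2_cases_iff less_trans_Suc nat_neq_iff numeral_2_eq_2 zero_less_Suc)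

lemma supported_on_pair_sum:
  assumes w: "w \<in> V" and ij: "i < m" "j < m" "i \<noteq> j"
    and supp: "\<And>t. t < m \<Longrightarrow> t \<noteq> i \<Longrightarrow> t \<noteq> j \<Longrightarrow> w t = 0"
  shows "w i + w j = n"
proof -
  have "w i + w j = corner j i + corner j j"
    by (rule SR_verts_pair_sum_eq[OF w corner_in_V[OF ij(2)] ij]) (use supp in \<open>auto simp: corner_def\<close>)
  then show ?thesis using ij by (simp add: corner_def)
qed

lemma supported_on_pair:
  assumes w: "w \<in> V" and ij: "i < m" "j < m" "i \<noteq> j"
    and supp: "\<And>t. t < m \<Longrightarrow> t \<noteq> i \<Longrightarrow> t \<noteq> j \<Longrightarrow> w t = 0"
  shows "w = pair_vert i j (w i)"
  using supported_on_pair_sum[OF assms]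
  by (intro SR_verts_eqI[OF w pair_vert_in_V[OF ij]]) (auto simp: pair_vert_def supp)

lemma corner_neighbour:
  assumes i: "i < m" and w: "w \<in> V" and a: "adj (corner i) w"
  obtains l u where "l < m" "l \<noteq> i" "u < n" "w = pair_vert i l u"
proof -
  obtain l where l: "l < m" "l \<noteq> i" "corner i l \<noteq> w l"
    "\<forall>t<m. t \<noteq> i \<longrightarrow> t \<noteq> l \<longrightarrow> corner i t = w t"
  proof (rule SR_adj_other_diff[OF a i])
    show "corner i i \<noteq> w i"
    proof
      assume wi: "corner i i = w i"
      obtain a b where "a < m" "b < m" "a \<noteq> b" "corner i a \<noteq> w a" "corner i b \<noteq> w b"
        "\<And>t. t < m \<Longrightarrow> t \<noteq> a \<Longrightarrow> t \<noteq> b \<Longrightarrow> corner i t = w t"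
        using a by (rule SR_adjE) blast
      moreover from this have "corner i a + corner i b = w a + w b"
        by (intro SR_verts_pair_sum_eq[OF corner_in_V[OF i] w])
      ultimately show False using wi by (auto simp: corner_def split: if_splits)
    qed
  qed
  have "w = pair_vert i l (w i)"
    by (rule supported_on_pair[OF w i l(1) l(2)[symmetric]]) (use l(4) in \<open>auto simp: corner_def\<close>)
  moreover have "w i < n" using l(3) SR_verts_le[OF w, of i] \<open>w = _\<close> n_gt_2
    by (metis corner_def le_neq_implies_less pair_vert_n)
  ultimately show thesis using that l(1,2) by blast
qed

lemma pair_vert_adj_iff:
  assumes "i < m" "j < m" "l < m" "j \<noteq> i" "l \<noteq> i" "u < n" "v < n"
  shows "adj (pair_vert i j u) (pair_vert i l v) \<longleftrightarrow> (j = l \<and> u \<noteq> v) \<or> (j \<noteq> l \<and> u = v)"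
proof
  assume A: "adj (pair_vert i j u) (pair_vert i l v)"
  show "(j = l \<and> u \<noteq> v) \<or> (j \<noteq> l \<and> u = v)"
  proof (rule ccontr)
    assume "\<not> ?thesis"
    then consider "j = l" "u = v" | "j \<noteq> l" "u \<noteq> v" by blast
    then show False
    proof cases
      case 1 then show False using A SR_adj_imp_neq by blast
    next
      case 2 show False
        by (rule SR_adj_no_three_diffs[OF A, of i j l]) (use assms 2 in \<open>auto simp: pair_vert_def\<close>)
    qed
  qed
next
  assume "(j = l \<and> u \<noteq> v) \<or> (j \<noteq> l \<and> u = v)"
  then show "adj (pair_vert i j u) (pair_vert i l v)"
  proof
    assume "j = l \<and> u \<noteq> v"
    then show ?thesis by (intro SR_adjI[where a=i and b=j]) (use assms in \<open>auto simp: pair_vert_def\<close>)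
  next
    assume "j \<noteq> l \<and> u = v"
    then show ?thesis by (intro SR_adjI[where a=j and b=l]) (use assms in \<open>auto simp: pair_vert_def\<close>)
  qed
qed

section \<open>Recognising the corners\<close>

definition common_nbrs :: "(nat \<Rightarrow> nat) \<Rightarrow> (nat \<Rightarrow> nat) \<Rightarrow> (nat \<Rightarrow> nat) \<Rightarrow> (nat \<Rightarrow> nat) set" where
  "common_nbrs x y z = {w \<in> V. adj x w \<and> adj y w \<and> adj z w}"

definition corner_like :: "(nat \<Rightarrow> nat) \<Rightarrow> bool" where
  "corner_like x \<longleftrightarrow> (\<forall>y\<in>V. \<forall>z\<in>V. adj x y \<longrightarrow> adj x z \<longrightarrow> y \<noteq> z \<longrightarrow> \<not> adj y z \<longrightarrow>
      card (common_nbrs x y z) = 2)"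

lemma corner_like_corner:
  assumes i: "i < m"
  shows "corner_like (corner i)"
  unfolding corner_like_def
proof (intro ballI impI)
  fix y z assume "y \<in> V" "z \<in> V" "adj (corner i) y" "adj (corner i) z" "y \<noteq> z" "\<not> adj y z"
  obtain j u where j: "j < m" "j \<noteq> i" "u < n" and y: "y = pair_vert i j u"
    using corner_neighbour[OF i \<open>y \<in> V\<close> \<open>adj (corner i) y\<close>] by blast
  obtain l v where l: "l < m" "l \<noteq> i" "v < n" and z: "z = pair_vert i l v"
    using corner_neighbour[OF i \<open>z \<in> V\<close> \<open>adj (corner i) z\<close>] by blast
  note adj_iff = pair_vert_adj_iff[OF i]
  have jl: "j \<noteq> l" "u \<noteq> v" using \<open>\<not> adj y z\<close> \<open>y \<noteq> z\<close> adj_iff[OF j(1) l(1) j(2) l(2) j(3) l(3)] y z by auto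
  have "common_nbrs (corner i) y z = {pair_vert i j v, pair_vert i l u}"
  proof (intro equalityI subsetI)
    fix w assume "w \<in> common_nbrs (corner i) y z"
    then have w: "w \<in> V" "adj (corner i) w" "adj y w" "adj z w" by (auto simp: common_nbrs_def)
    obtain t s where t: "t < m" "t \<noteq> i" "s < n" "w = pair_vert i t s"
      using corner_neighbour[OF i w(1,2)] by blast
    show "w \<in> {pair_vert i j v, pair_vert i l u}"
      using w(3,4) adj_iff[OF j(1) t(1) j(2) t(2) j(3) t(3)] adj_iff[OF l(1) t(1) l(2) t(2) l(3) t(3)]
        y z t(4) jl by auto
  next
    fix w assume "w \<in> {pair_vert i j v, pair_vert i l u}"
    then show "w \<in> common_nbrs (corner i) y z"
      using adj_iff[OF j(1) j(1) j(2) j(2) j(3) l(3)] adj_iff[OF l(1) j(1) l(2) j(2) l(3) l(3)]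
        adj_iff[OF j(1) l(1) j(2) l(2) j(3) j(3)] adj_iff[OF l(1) l(1) l(2) l(2) l(3) j(3)]
        adj_corner_pair_vert_fst[OF i j(1) j(2)[symmetric] l(3)]
        adj_corner_pair_vert_fst[OF i l(1) l(2)[symmetric] j(3)]
        pair_vert_in_V[OF i j(1) j(2)[symmetric]] pair_vert_in_V[OF i l(1) l(2)[symmetric]] jl j l y z
      by (auto simp: common_nbrs_def)
  qed
  moreover have "pair_vert i j v i \<noteq> pair_vert i l u i" using jl by (simp add: pair_vert_def)
  ultimately show "card (common_nbrs (corner i) y z) = 2" by (metis card_2_iff)
qed

lemma not_corner_like_three_common:
  assumes "y \<in> V" "z \<in> V" "adj x y" "adj x z" "y \<noteq> z" "\<not> adj y z"
    and "{w1, w2, w3} \<subseteq> common_nbrs x y z" "w1 \<noteq> w2" "w1 \<noteq> w3" "w2 \<noteq> w3"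
  shows "\<not> corner_like x"
proof
  assume "corner_like x"
  then have c: "card (common_nbrs x y z) = 2" using assms(1-6) unfolding corner_like_def by blast
  then have "finite (common_nbrs x y z)" by (metis card.infinite zero_neq_numeral)
  then show False using card_mono[OF _ assms(7)] c assms(8-10) by simp
qed

text \<open>For \<open>x\<close> with three nonzero coordinates \<open>p, q, k\<close>, the two neighbours obtained by moving a
  unit \<open>p \<rightarrow> k\<close> and \<open>q \<rightarrow> p\<close> have the three common neighbours obtained by moving a unit
  \<open>p \<rightarrow> q\<close>, \<open>q \<rightarrow> k\<close>, \<open>k \<rightarrow> p\<close>.\<close>

lemma not_corner_like_three_support:
  assumes x: "x \<in> V" and pqk: "p < m" "q < m" "k < m" "p \<noteq> q" "p \<noteq> k" "q \<noteq> k"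
    and nz: "x p \<noteq> 0" "x q \<noteq> 0" "x k \<noteq> 0"
  shows "\<not> corner_like x"
proof -
  define y where "y = x(p := x p - 1, k := x k + 1)"
  define z where "z = x(q := x q - 1, p := x p + 1)"
  define w1 where "w1 = x(p := x p - 1, q := x q + 1)"
  define w2 where "w2 = x(q := x q - 1, k := x k + 1)"
  define w3 where "w3 = x(k := x k - 1, p := x p + 1)"
  have V: "y \<in> V" "z \<in> V" "w1 \<in> V" "w2 \<in> V" "w3 \<in> V"
    unfolding y_def z_def w1_def w2_def w3_def using pqk nz
    by (auto intro!: SR_verts_upd2[OF x])
  note ds = pqk(4-6) pqk(4-6)[symmetric]
  show ?thesis
  proof (rule not_corner_like_three_common[OF V(1,2)])
    show "adj x y" unfolding y_def by (rule SR_adjI[where a=p and b=k]) (use pqk nz in auto)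
    show "adj x z" unfolding z_def by (rule SR_adjI[where a=q and b=p]) (use pqk nz in auto)
    show "y \<noteq> z" using ds by (auto simp: y_def z_def dest: fun_cong[where x=p])
    show "\<not> adj y z"
    proof
      assume "adj y z"
      then show False
        by (rule SR_adj_no_three_diffs[where a=p and b=q and c=k]) (use pqk nz in \<open>auto simp: y_def z_def\<close>)
    qed
    have "adj x w1" "adj y w1" "adj z w1"
      unfolding y_def z_def w1_def
      by (rule SR_adjI[where a=p and b=q] SR_adjI[where a=q and b=k]; use pqk nz in auto)+
    moreover have "adj x w2" "adj y w2" "adj z w2"
      unfolding y_def z_def w2_def
      by (rule SR_adjI[where a=q and b=k] SR_adjI[where a=p and b=q] SR_adjI[where a=p and b=k];
          use pqk nz in auto)+
    moreover have "adj x w3" "adj y w3" "adj z w3"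
      unfolding y_def z_def w3_def
      by (rule SR_adjI[where a=p and b=k] SR_adjI[where a=q and b=k]; use pqk nz in auto)+
    ultimately show "{w1, w2, w3} \<subseteq> common_nbrs x y z" using V by (simp add: common_nbrs_def)
    show "w1 \<noteq> w2" using ds nz by (auto simp: w1_def w2_def dest: fun_cong[where x=p])
    show "w1 \<noteq> w3" using ds nz by (auto simp: w1_def w3_def dest: fun_cong[where x=q])
    show "w2 \<noteq> w3" using ds nz by (auto simp: w2_def w3_def dest: fun_cong[where x=q])
  qed
qed

text \<open>For \<open>x = x\<^sub>p e\<^sub>p + x\<^sub>q e\<^sub>q\<close> with \<open>x\<^sub>p \<ge> 2\<close>, take the neighbours \<open>y\<close> (all of \<open>x\<^sub>p\<close> moved to a
  third position \<open>k\<close>) and \<open>z\<close> (one unit moved from \<open>q\<close> to \<open>p\<close>): their only possible common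
  neighbour adjacent to \<open>x\<close> is the corner \<open>n e\<^sub>q\<close>.\<close>

context
  fixes x :: "nat \<Rightarrow> nat" and p q k :: nat
  assumes x: "x \<in> V" and pqk: "p < m" "q < m" "k < m" "p \<noteq> q" "p \<noteq> k" "q \<noteq> k"
    and xp: "2 \<le> x p" and xq: "1 \<le> x q"
    and supp: "\<And>t. t < m \<Longrightarrow> t \<noteq> p \<Longrightarrow> t \<noteq> q \<Longrightarrow> x t = 0"
begin

lemma two_support_common_nbr_moves_p:
  assumes w: "w \<in> V" "adj x w" "adj (x(p := 0, k := x p)) w" "adj (x(p := x p + 1, q := x q - 1)) w"
  shows "w p \<noteq> x p"
proof
  assume wp: "w p = x p"
  have xk: "x k = 0" using supp pqk by simp
  show False
  proof (cases "x q = w q")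
    case True
    obtain a b where ab: "a < m" "b < m" "a \<noteq> b" "x a \<noteq> w a" "x b \<noteq> w b"
      "\<And>i. i < m \<Longrightarrow> i \<noteq> a \<Longrightarrow> i \<noteq> b \<Longrightarrow> x i = w i" using w(2) by (rule SR_adjE) blast
    then have "a \<noteq> p" "a \<noteq> q" "b \<noteq> p" "b \<noteq> q" using wp True by auto
    then have "x a = 0" "x b = 0" using supp ab(1,2) by auto
    moreover have "x a + x b = w a + w b" by (rule SR_verts_pair_sum_eq[OF x w(1) ab(1-3) ab(6)])
    ultimately show False using ab(4) by simp
  next
    case False
    obtain b where b: "b < m" "b \<noteq> q" "x b \<noteq> w b" "\<forall>t<m. t \<noteq> q \<longrightarrow> t \<noteq> b \<longrightarrow> x t = w t"
      using SR_adj_other_diff[OF w(2) pqk(2) False] by blast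
    have "b \<noteq> p" using b wp by auto
    then have xb: "x b = 0" using supp b by auto
    have s: "x q + x b = w q + w b"
      by (rule SR_verts_pair_sum_eq[OF x w(1) pqk(2) b(1) b(2)[symmetric]]) (use b in auto)
    show False
    proof (cases "b = k")
      case True
      have "w q = x q - 1"
      proof (rule ccontr)
        assume "w q \<noteq> x q - 1"
        show False
          by (rule SR_adj_no_three_diffs[OF w(4), of p q k])
            (use \<open>w q \<noteq> x q - 1\<close> pqk wp b(3) True xk in auto)
      qed
      then have "w k = 1" using s xb True xq by auto
      show False
        by (rule SR_adj_no_three_diffs[OF w(3), of p q k]) (use \<open>w k = 1\<close> pqk xp wp False in auto)
    next
      case False
      then have "w k = 0" using b(4) pqk xk by auto
      show False
        by (rule SR_adj_no_three_diffs[OF w(3), of p q k])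
          (use \<open>w k = 0\<close> pqk xp wp \<open>x q \<noteq> w q\<close> in auto)
    qed
  qed
qed

lemma two_support_common_nbr_eq_corner:
  assumes w: "w \<in> V" "adj x w" "adj (x(p := 0, k := x p)) w" "adj (x(p := x p + 1, q := x q - 1)) w"
  shows "w = corner q"
proof -
  have wp: "x p \<noteq> w p" using two_support_common_nbr_moves_p[OF w] by simp
  obtain b where b: "b < m" "b \<noteq> p" "x b \<noteq> w b" and same: "\<forall>t<m. t \<noteq> p \<longrightarrow> t \<noteq> b \<longrightarrow> x t = w t"
    using SR_adj_other_diff[OF w(2) pqk(1) wp] by blast
  have s: "x p + x b = w p + w b"
    by (rule SR_verts_pair_sum_eq[OF x w(1) pqk(1) b(1) b(2)[symmetric]]) (use same in auto)
  show ?thesis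
  proof (cases "b = q")
    case True
    have w0: "w t = 0" if "t < m" "t \<noteq> p" "t \<noteq> q" for t
      using same supp[OF that] that True by metis
    have "w p = 0"
    proof (rule ccontr)
      assume "w p \<noteq> 0"
      show False
        by (rule SR_adj_no_three_diffs[OF w(3), of k q p])
          (use \<open>w p \<noteq> 0\<close> pqk xp w0[of k] b(3) True in auto)
    qed
    then have "w = pair_vert p q 0" using supported_on_pair[OF w(1) pqk(1,2,4)] w0 by metis
    then show ?thesis using pair_vert_0[OF pqk(4)] by simp
  next
    case False
    have "x b = 0" using supp b(1,2) False by blast
    then have "(x(p := x p + 1, q := x q - 1)) p \<noteq> w p" using s b(3) pqk(4) by auto
    moreover have "(x(p := x p + 1, q := x q - 1)) q \<noteq> w q" using same pqk(2,4) False xq by auto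
    moreover have "(x(p := x p + 1, q := x q - 1)) b \<noteq> w b" using b(2,3) False by auto
    ultimately show ?thesis
      using SR_adj_no_three_diffs[OF w(4) pqk(1,2) b(1) pqk(4) b(2)[symmetric] False[symmetric]] by blast
  qed
qed

lemma not_corner_like_two_support: "\<not> corner_like x"
proof
  let ?y = "x(p := 0, k := x p)" and ?z = "x(p := x p + 1, q := x q - 1)"
  assume "corner_like x"
  moreover have "?y \<in> V" "?z \<in> V" using pqk xq supp by (auto intro!: SR_verts_upd2[OF x])
  moreover have "adj x ?y" by (rule SR_adjI[where a=p and b=k]) (use pqk xp supp in auto)
  moreover have "adj x ?z" by (rule SR_adjI[where a=p and b=q]) (use pqk xq in auto)
  moreover have "?y \<noteq> ?z" using pqk by (auto dest: fun_cong[where x=p])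
  moreover have "\<not> adj ?y ?z"
  proof
    assume a: "adj ?y ?z"
    show False by (rule SR_adj_no_three_diffs[OF a, of p q k]) (use pqk xp xq supp in auto)
  qed
  ultimately have "card (common_nbrs x ?y ?z) = 2" unfolding corner_like_def by blast
  moreover have "common_nbrs x ?y ?z \<subseteq> {corner q}"
    using two_support_common_nbr_eq_corner by (auto simp: common_nbrs_def)
  ultimately show False using card_mono[of "{corner q}" "common_nbrs x ?y ?z"] by simp
qed

end

lemma noncorner_two_support:
  assumes x: "x \<in> V" and nc: "\<forall>i<m. x \<noteq> corner i"
  obtains p q where "p < m" "q < m" "p \<noteq> q" "x p \<noteq> 0" "x q \<noteq> 0"
proof -
  have s: "(\<Sum>i<m. x i) = n" using x by (simp add: mem_SR_verts)
  then obtain p where p: "p < m" "x p \<noteq> 0" using n_gt_2 by (metis gr_implies_not0 lessThan_iff sum.neutral)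
  have "\<exists>q<m. q \<noteq> p \<and> x q \<noteq> 0"
  proof (rule ccontr)
    assume "\<not> ?thesis"
    then have z: "\<And>q. q < m \<Longrightarrow> q \<noteq> p \<Longrightarrow> x q = 0" by blast
    have "(\<Sum>i<m. x i) = x p + (\<Sum>i\<in>{..<m} - {p}. x i)" using p by (simp add: sum.remove)
    also have "(\<Sum>i\<in>{..<m} - {p}. x i) = 0" using z by (intro sum.neutral) auto
    finally have "x p = n" using s by simp
    then have "x = corner p" using z by (intro SR_verts_eqI[OF x corner_in_V[OF p(1)]]) (auto simp: corner_def)
    then show False using nc p by blast
  qed
  then show thesis using that p by blast
qed

lemma corner_like_iff_corner:
  assumes x: "x \<in> V"
  shows "corner_like x \<longleftrightarrow> (\<exists>i<m. x = corner i)"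
proof
  assume cl: "corner_like x"
  show "\<exists>i<m. x = corner i"
  proof (rule ccontr)
    assume "\<not> ?thesis"
    then obtain p q where pq: "p < m" "q < m" "p \<noteq> q" "x p \<noteq> 0" "x q \<noteq> 0"
      using noncorner_two_support[OF x] by blast
    obtain k where k: "k < m" "k \<noteq> p" "k \<noteq> q" using ex_third[OF pq(1,2)] by blast
    show False
    proof (cases "\<exists>k<m. k \<noteq> p \<and> k \<noteq> q \<and> x k \<noteq> 0")
      case True
      then show False using not_corner_like_three_support[OF x pq(1,2) _ pq(3)] pq(4,5) cl by blast
    next
      case False
      then have supp: "\<And>t. t < m \<Longrightarrow> t \<noteq> p \<Longrightarrow> t \<noteq> q \<Longrightarrow> x t = 0" by blast
      have "x p + x q = n" by (rule supported_on_pair_sum[OF x pq(1-3) supp])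
      then consider "2 \<le> x p" | "2 \<le> x q" using n_gt_2 by linarith
      then show False
      proof cases
        case 1
        then show False
          using not_corner_like_two_support[OF x pq(1,2) k(1) pq(3) k(2)[symmetric] k(3)[symmetric]]
            pq(5) supp cl by auto
      next
        case 2
        then show False
          using not_corner_like_two_support[OF x pq(2,1) k(1) pq(3)[symmetric] k(3)[symmetric] k(2)[symmetric]]
            pq(4) supp cl by auto
      qed
    qed
  qed
qed (use corner_like_corner in blast)

lemma common_nbrs_SR_Aut:
  assumes f: "f \<in> SR_Aut m n" and xyz: "x \<in> V" "y \<in> V" "z \<in> V"
  shows "common_nbrs (f x) (f y) (f z) = f ` common_nbrs x y z"
proof (intro equalityI subsetI)
  fix w assume "w \<in> common_nbrs (f x) (f y) (f z)"
  moreover obtain w0 where "w0 \<in> V" "w = f w0"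
    using SR_Aut_surj[OF f] calculation by (auto simp: common_nbrs_def)
  ultimately show "w \<in> f ` common_nbrs x y z"
    using SR_Aut_adj_iff[OF f] xyz by (auto simp: common_nbrs_def)
qed (use SR_Aut_adj_iff[OF f] SR_Aut_in_SR_verts[OF f] xyz in \<open>auto simp: common_nbrs_def\<close>)

lemma corner_like_SR_Aut:
  assumes f: "f \<in> SR_Aut m n" and x: "x \<in> V" and cl: "corner_like x"
  shows "corner_like (f x)"
  unfolding corner_like_def
proof (intro ballI impI)
  fix y' z' assume "y' \<in> V" "z' \<in> V" and yz': "adj (f x) y'" "adj (f x) z'" "y' \<noteq> z'" "\<not> adj y' z'"
  then obtain y z where yz: "y \<in> V" "z \<in> V" "y' = f y" "z' = f z" using SR_Aut_surj[OF f] by metis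
  have "card (common_nbrs x y z) = 2"
    using cl yz yz' SR_Aut_adj_iff[OF f] x unfolding corner_like_def by auto
  moreover have "inj_on f (common_nbrs x y z)"
    using SR_Aut_eq_iff[OF f] by (auto simp: inj_on_def common_nbrs_def)
  ultimately show "card (common_nbrs (f x) y' z') = 2"
    using common_nbrs_SR_Aut[OF f x yz(1,2)] yz(3,4) by (simp add: card_image)
qed

lemma SR_Aut_corner:
  assumes f: "f \<in> SR_Aut m n" and i: "i < m"
  obtains j where "j < m" "f (corner i) = corner j"
  using corner_like_SR_Aut[OF f corner_in_V[OF i] corner_like_corner[OF i]]
    corner_like_iff_corner[OF SR_Aut_in_SR_verts[OF f corner_in_V[OF i]]] that by blast

section \<open>Automorphisms fixing the corners\<close>

definition on_line :: "(nat \<Rightarrow> nat) \<Rightarrow> nat \<Rightarrow> nat \<Rightarrow> bool" where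
  "on_line x i j \<longleftrightarrow> (\<forall>t<m. t \<noteq> i \<longrightarrow> t \<noteq> j \<longrightarrow> x t = 0)"

lemma on_line_cases:
  assumes x: "x \<in> V" and ij: "i < m" "j < m" "i \<noteq> j" and l: "on_line x i j"
  obtains "x = corner j" | "x = corner i" | u where "0 < u" "u < n" "x = pair_vert i j u"
proof -
  have "x = pair_vert i j (x i)" using supported_on_pair[OF x ij] l by (simp add: on_line_def)
  moreover have "x i \<le> n" by (rule SR_verts_le[OF x])
  ultimately show thesis using that pair_vert_0[OF ij(3)] pair_vert_n
    by (metis le_neq_implies_less not_gr_zero)
qed

lemma SR_Aut_pair_vert:
  assumes g: "g \<in> SR_Aut m n" and gc: "\<And>i. i < m \<Longrightarrow> g (corner i) = corner i"
    and ij: "i < m" "j < m" "i \<noteq> j" and u: "0 < u" "u < n"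
  obtains v where "0 < v" "v < n" "g (pair_vert i j u) = pair_vert i j v"
proof -
  have PV: "pair_vert i j u \<in> V" using pair_vert_in_V ij u by simp
  let ?w = "g (pair_vert i j u)"
  have wV: "?w \<in> V" using SR_Aut_in_SR_verts[OF g PV] .
  have a1: "adj (corner i) ?w"
    using SR_Aut_adj_iff[OF g corner_in_V[OF ij(1)] PV] gc ij adj_corner_pair_vert_fst[OF ij u(2)] by simp
  have a2: "adj (corner j) ?w"
    using SR_Aut_adj_iff[OF g corner_in_V[OF ij(2)] PV] gc ij adj_corner_pair_vert_snd[OF ij u(1)] u(2)
    by simp
  obtain l v where lv: "l < m" "l \<noteq> i" "v < n" "?w = pair_vert i l v"
    using corner_neighbour[OF ij(1) wV a1] by blast
  have "?w \<noteq> corner l"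
    using SR_Aut_eq_iff[OF g PV corner_in_V[OF lv(1)]] gc[OF lv(1)] pair_vert_neq_corner[OF ij(3) u] by simp
  then have v0: "v \<noteq> 0" using lv(2,4) pair_vert_0 by metis
  have "l = j"
  proof (rule ccontr)
    assume "l \<noteq> j"
    show False
      by (rule SR_adj_no_three_diffs[OF a2, of i j l])
        (use ij lv \<open>l \<noteq> j\<close> v0 n_gt_2 in \<open>auto simp: corner_def pair_vert_def\<close>)
  qed
  then show thesis using that lv v0 by blast
qed

lemma SR_Aut_inv_fixes_corners:
  assumes g: "g \<in> SR_Aut m n" and gc: "\<And>i. i < m \<Longrightarrow> g (corner i) = corner i" and i: "i < m"
  shows "restrict (inv_into V g) V (corner i) = corner i"
  using SR_Aut_bij_betw[OF g] corner_in_V[OF i] gc[OF i]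
  by (metis bij_betw_imp_inj_on inv_into_f_f restrict_apply')

lemma SR_Aut_on_line_back:
  assumes g: "g \<in> SR_Aut m n" and gc: "\<And>i. i < m \<Longrightarrow> g (corner i) = corner i"
    and x: "x \<in> V" and ij: "i < m" "j < m" "i \<noteq> j" and l: "on_line (g x) i j"
  shows "on_line x i j"
proof -
  let ?h = "restrict (inv_into V g) V"
  have h: "?h \<in> SR_Aut m n" by (rule SR_Aut_inv[OF g])
  have hg: "?h (g x) = x"
    using SR_Aut_bij_betw[OF g] x SR_Aut_in_SR_verts[OF g x] by (simp add: bij_betw_def inv_into_f_f)
  from on_line_cases[OF SR_Aut_in_SR_verts[OF g x] ij l] show ?thesis
  proof cases
    case 1
    then have "x = corner j" using hg SR_Aut_inv_fixes_corners[OF g gc ij(2)] by simp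
    then show ?thesis by (auto simp: on_line_def corner_def)
  next
    case 2
    then have "x = corner i" using hg SR_Aut_inv_fixes_corners[OF g gc ij(1)] by simp
    then show ?thesis by (auto simp: on_line_def corner_def)
  next
    case (3 u)
    obtain v where "?h (pair_vert i j u) = pair_vert i j v"
      using SR_Aut_pair_vert[OF h SR_Aut_inv_fixes_corners[OF g gc] ij 3(1,2)] by blast
    then have "x = pair_vert i j v" using hg 3(3) by simp
    then show ?thesis by (auto simp: on_line_def pair_vert_def)
  qed
qed

lemma common_nbr_of_raised:
  assumes x: "x \<in> V" and jk: "j < m" "k < m" "j \<noteq> 0" "k \<noteq> 0" "j \<noteq> k" "x j \<noteq> 0" "x k \<noteq> 0"
    and yV: "y \<in> V" and y0: "y 0 \<le> x 0"
    and ayj: "adj y (x(0 := x 0 + 1, j := x j - 1))" and ayk: "adj y (x(0 := x 0 + 1, k := x k - 1))"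
  shows "y = x"
proof -
  have m0: "0 < m" using m_gt_2 by simp
  define zj where "zj = x(0 := x 0 + 1, j := x j - 1)"
  define zk where "zk = x(0 := x 0 + 1, k := x k - 1)"
  have zjV: "zj \<in> V" unfolding zj_def using jk m0 by (auto intro!: SR_verts_upd2[OF x])
  have d0j: "y 0 \<noteq> zj 0" using y0 jk by (simp add: zj_def)
  have d0k: "y 0 \<noteq> zk 0" using y0 jk by (simp add: zk_def)
  obtain bj where bj: "bj < m" "bj \<noteq> 0" "y bj \<noteq> zj bj" "\<forall>t<m. t \<noteq> 0 \<longrightarrow> t \<noteq> bj \<longrightarrow> y t = zj t"
    using SR_adj_other_diff[OF ayj[folded zj_def] m0 d0j] by blast
  obtain bk where bk: "bk < m" "bk \<noteq> 0" "y bk \<noteq> zk bk" "\<forall>t<m. t \<noteq> 0 \<longrightarrow> t \<noteq> bk \<longrightarrow> y t = zk t"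
    using SR_adj_other_diff[OF ayk[folded zk_def] m0 d0k] by blast
  have bjj: "bj = j"
  proof (rule ccontr)
    assume "bj \<noteq> j"
    then have yj: "y j = x j - 1" using bj(4) jk by (simp add: zj_def)
    then have "y j \<noteq> zk j" using jk by (simp add: zk_def)
    then have "bk = j" using bk(4) jk by blast
    then have yk: "y k = x k - 1" using bk(4) jk by (simp add: zk_def)
    then have "y k \<noteq> zj k" using jk by (simp add: zj_def)
    then have "bj = k" using bj(4) jk by blast
    have "y 0 + y k = zj 0 + zj k"
      by (rule SR_verts_pair_sum_eq[OF yV zjV m0 jk(2) jk(4)[symmetric]]) (use bj(4) \<open>bj = k\<close> in auto)
    then show False using yk y0 jk by (simp add: zj_def)
  qed
  have bkk: "bk = k"
  proof (rule ccontr)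
    assume "bk \<noteq> k"
    then have "y k = x k - 1" using bk(4) jk by (simp add: zk_def)
    then have "y k \<noteq> zj k" using jk by (simp add: zj_def)
    then have "bj = k" using bj(4) jk by blast
    then show False using bjj jk by simp
  qed
  have yt: "y t = x t" if t: "t < m" "t \<noteq> 0" for t
  proof (cases "t = j")
    case True then show ?thesis using bk(4) bkk jk t by (simp add: zk_def)
  next
    case False then show ?thesis using bj(4) bjj jk t by (simp add: zj_def)
  qed
  have "y 0 + y j = x 0 + x j"
    by (rule SR_verts_pair_sum_eq[OF yV x m0 jk(1) jk(3)[symmetric]]) (use yt in auto)
  then have "y 0 = x 0" using yt[OF jk(1,3)] by simp
  then show ?thesis using yt by (intro SR_verts_eqI[OF yV x]) metis
qed

lemma SR_Aut_fixing_lines: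
  assumes g: "g \<in> SR_Aut m n" and gc: "\<And>i. i < m \<Longrightarrow> g (corner i) = corner i"
    and gp: "\<And>i j u. i < m \<Longrightarrow> j < m \<Longrightarrow> i \<noteq> j \<Longrightarrow> 0 < u \<Longrightarrow> u < n \<Longrightarrow>
               g (pair_vert i j u) = pair_vert i j u"
    and x: "x \<in> V"
  shows "g x = x"
  using x
proof (induction "n - x 0" arbitrary: x rule: less_induct)
  case (less x)
  have m0: "0 < m" using m_gt_2 by simp
  show ?case
  proof (cases "\<exists>j<m. j \<noteq> 0 \<and> on_line x 0 j")
    case True
    then obtain j where "j < m" "j \<noteq> 0" "on_line x 0 j" by blast
    from on_line_cases[OF less.prems m0 this(1) this(2)[symmetric] this(3)] show ?thesis
      by cases (use gc gp m0 \<open>j < m\<close> \<open>j \<noteq> 0\<close> in auto)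
  next
    case False
    moreover have "1 < m" "(1::nat) \<noteq> 0" using m_gt_2 by simp_all
    ultimately have "\<not> on_line x 0 1" by blast
    then obtain j where j: "j < m" "j \<noteq> 0" "j \<noteq> 1" "x j \<noteq> 0" by (auto simp: on_line_def)
    with False obtain k where "k < m" "k \<noteq> 0" "k \<noteq> j" "x k \<noteq> 0"
      by (auto simp: on_line_def)
    with j have jk: "j < m" "k < m" "j \<noteq> 0" "k \<noteq> 0" "j \<noteq> k" "x j \<noteq> 0" "x k \<noteq> 0" by auto
    let ?zj = "x(0 := x 0 + 1, j := x j - 1)" and ?zk = "x(0 := x 0 + 1, k := x k - 1)"
    have zV: "?zj \<in> V" "?zk \<in> V" using jk m0 by (auto intro!: SR_verts_upd2[OF less.prems])
    have "x 0 + x j \<le> n" "x 0 + x k \<le> n"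
      using SR_verts_pair_le[OF less.prems m0] jk by auto
    then have "n - ?zj 0 < n - x 0" "n - ?zk 0 < n - x 0" using jk by auto
    then have "g ?zj = ?zj" "g ?zk = ?zk" using less.hyps zV by blast+
    moreover have "adj x ?zj" "adj x ?zk"
      by (rule SR_adjI[where a=0 and b=j] SR_adjI[where a=0 and b=k]; use jk m0 in auto)+
    ultimately have "adj (g x) ?zj" "adj (g x) ?zk"
      using SR_Aut_adj_iff[OF g less.prems zV(1)] SR_Aut_adj_iff[OF g less.prems zV(2)] by simp_all
    moreover have gxV: "g x \<in> V" using SR_Aut_in_SR_verts[OF g less.prems] .
    moreover have "g x 0 \<le> x 0"
    proof (rule ccontr)
      assume "\<not> g x 0 \<le> x 0"
      moreover have "g x 0 \<le> n" by (rule SR_verts_le[OF gxV])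
      ultimately have "n - g x 0 < n - x 0" by linarith
      then have "g (g x) = g x" using less.hyps gxV by blast
      then show False using SR_Aut_eq_iff[OF g gxV less.prems] \<open>\<not> g x 0 \<le> x 0\<close> by simp
    qed
    ultimately show "g x = x" using common_nbr_of_raised[OF less.prems jk] by blast
  qed
qed

section \<open>The exceptional automorphism for \<open>n = 3\<close>\<close>

definition swap_digit :: "nat \<Rightarrow> nat" where
  "swap_digit v = (if v = 1 then 2 else if v = 2 then 1 else v)"

lemma swap_digit_swap_digit [simp]: "swap_digit (swap_digit v) = v"
  by (simp add: swap_digit_def)

lemma swap_digit_eq_iff [simp]: "swap_digit u = swap_digit v \<longleftrightarrow> u = v"
  by (metis swap_digit_swap_digit)

lemma swap12_apply:
  "x \<in> V \<Longrightarrow> swap12 m n x = (if \<exists>i. x i = 2 then (\<lambda>k. swap_digit (x k)) else x)"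
  by (simp add: swap12_def swap_digit_def)

context
  assumes n3: "n = 3"
begin

lemma vertex_with_2:
  assumes x: "x \<in> V" and xi: "x i = 2"
  obtains j where "i < m" "j < m" "j \<noteq> i" "x j = 1" "\<forall>t<m. t \<noteq> i \<longrightarrow> t \<noteq> j \<longrightarrow> x t = 0"
proof -
  have im: "i < m" using x xi by (metis mem_SR_verts not_le zero_neq_numeral)
  have "(\<Sum>t<m. x t) = x i + (\<Sum>t\<in>{..<m} - {i}. x t)" using im by (simp add: sum.remove)
  then have s1: "(\<Sum>t\<in>{..<m} - {i}. x t) = 1" using x xi n3 by (simp add: mem_SR_verts)
  then obtain j where j: "j \<in> {..<m} - {i}" "x j \<noteq> 0" by (metis sum.neutral zero_neq_one)
  have "x j \<le> (\<Sum>t\<in>{..<m} - {i}. x t)" using j by (intro member_le_sum) auto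
  then have xj: "x j = 1" using s1 j by simp
  have jm: "j < m" "j \<noteq> i" using j by auto
  have "(\<Sum>t<m. x t) = x i + x j + (\<Sum>t\<in>{..<m} - {i,j}. x t)"
    using sum_lessThan_remove2[OF im jm(1)] jm by simp
  then have "(\<Sum>t\<in>{..<m} - {i,j}. x t) = 0" using x xi xj n3 by (simp add: mem_SR_verts)
  then have "\<forall>t<m. t \<noteq> i \<longrightarrow> t \<noteq> j \<longrightarrow> x t = 0" by simp
  then show thesis using that im jm xj by blast
qed

lemma swap12_vertex_with_2:
  assumes x: "x \<in> V" and xi: "x i = 2" and j: "j \<noteq> i" "x j = 1"
    and z: "\<And>t. t < m \<Longrightarrow> t \<noteq> i \<Longrightarrow> t \<noteq> j \<Longrightarrow> x t = 0"
  shows "swap12 m n x = x(i := 1, j := 2)"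
proof
  fix k
  have "x k = 0" if "k \<noteq> i" "k \<noteq> j" using z that x by (cases "k < m") (auto simp: mem_SR_verts)
  then show "swap12 m n x k = (x(i := 1, j := 2)) k"
    using swap12_apply[OF x] xi j by (auto simp: swap_digit_def)
qed

lemma swap12_in_V:
  assumes x: "x \<in> V"
  shows "swap12 m n x \<in> V"
proof (cases "\<exists>i. x i = 2")
  case True
  then obtain i where xi: "x i = 2" by blast
  obtain j where j: "i < m" "j < m" "j \<noteq> i" "x j = 1" "\<forall>t<m. t \<noteq> i \<longrightarrow> t \<noteq> j \<longrightarrow> x t = 0"
    using vertex_with_2[OF x xi] by blast
  have "x(i := 1, j := 2) \<in> V" using j xi by (intro SR_verts_upd2[OF x]) auto
  then show ?thesis using swap12_vertex_with_2[OF x xi j(3,4)] j(5) by simp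
qed (use swap12_apply[OF x] x in simp)

lemma swap12_involution:
  assumes x: "x \<in> V"
  shows "swap12 m n (swap12 m n x) = x"
proof (cases "\<exists>i. x i = 2")
  case True
  then obtain i where xi: "x i = 2" by blast
  obtain j where j: "j < m" "x j = 1" using vertex_with_2[OF x xi] by blast
  have "swap12 m n x = (\<lambda>k. swap_digit (x k))" using swap12_apply[OF x] True by simp
  moreover have "swap12 m n x j = 2" using calculation j by (simp add: swap_digit_def)
  ultimately show ?thesis using swap12_apply[OF swap12_in_V[OF x]] by auto
qed (use swap12_apply[OF x] in simp)

lemma swap12_adj_mixed:
  assumes x: "x \<in> V" and y: "y \<in> V" and a: "adj x y"
    and xi: "x i = 2" and y2: "\<forall>t. y t \<noteq> 2"
  shows "adj (swap12 m n x) y"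
proof -
  obtain j where j: "i < m" "j < m" "j \<noteq> i" "x j = 1" "\<forall>t<m. t \<noteq> i \<longrightarrow> t \<noteq> j \<longrightarrow> x t = 0"
    using vertex_with_2[OF x xi] by blast
  have s: "swap12 m n x = x(i := 1, j := 2)" using swap12_vertex_with_2[OF x xi j(3,4)] j(5) by blast
  have "x i \<noteq> y i" using xi y2 by metis
  then obtain b where b: "b < m" "b \<noteq> i" "x b \<noteq> y b" "\<forall>t<m. t \<noteq> i \<longrightarrow> t \<noteq> b \<longrightarrow> x t = y t"
    using SR_adj_other_diff[OF a j(1)] by blast
  have sm: "x i + x b = y i + y b"
    by (rule SR_verts_pair_sum_eq[OF x y j(1) b(1) b(2)[symmetric]]) (use b in auto)
  show ?thesis
  proof (cases "b = j")
    case True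
    have "y i \<noteq> 1"
    proof
      assume "y i = 1"
      then have "y j = 2" using sm True xi j by simp
      then show False using y2 by blast
    qed
    moreover have "y j \<noteq> 2" using y2 by blast
    ultimately show ?thesis unfolding s
      by (intro SR_adjI[where a=i and b=j]) (use j b True in auto)
  next
    case False
    have xb: "x b = 0" using j b False by auto
    have yj: "y j = 1" using b(4) j False by auto
    have "y b \<noteq> 0" "y i \<noteq> 2" "y b \<noteq> 2" using b(3) xb y2 by auto
    then have yi: "y i = 1" "y b = 1" using sm xi xb by auto
    show ?thesis unfolding s
    proof (rule SR_adjI[where a=j and b=b])
      fix t assume "t < m" "t \<noteq> j" "t \<noteq> b"
      then show "(x(i := 1, j := 2)) t = y t" using b(4) yi by (cases "t = i") auto
    qed (use j b False yj xb yi in auto)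
  qed
qed

lemma swap12_adj:
  assumes x: "x \<in> V" and y: "y \<in> V" and a: "adj x y"
  shows "adj (swap12 m n x) (swap12 m n y)"
proof (cases "\<exists>i. x i = 2"; cases "\<exists>i. y i = 2")
  assume "\<exists>i. x i = 2" "\<exists>i. y i = 2"
  then show ?thesis
    using a unfolding swap12_apply[OF x] swap12_apply[OF y] SR_adj_iff by simp
next
  assume "\<exists>i. x i = 2" "\<not> (\<exists>i. y i = 2)"
  then show ?thesis using swap12_adj_mixed[OF x y a] swap12_apply[OF y] by auto
next
  assume "\<not> (\<exists>i. x i = 2)" "\<exists>i. y i = 2"
  then show ?thesis
    using swap12_adj_mixed[OF y x SR_adj_sym[OF a]] SR_adj_sym swap12_apply[OF x] by auto
next
  assume "\<not> (\<exists>i. x i = 2)" "\<not> (\<exists>i. y i = 2)"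
  then show ?thesis using a swap12_apply[OF x] swap12_apply[OF y] by simp
qed

lemma swap12_in_SR_Aut: "swap12 m n \<in> SR_Aut m n"
proof -
  have "bij_betw (swap12 m n) V V"
    by (rule bij_betw_byWitness[where f'="swap12 m n"]) (use swap12_involution swap12_in_V in auto)
  moreover have "adj (swap12 m n x) (swap12 m n y) \<longleftrightarrow> adj x y" if x: "x \<in> V" and y: "y \<in> V" for x y
  proof
    assume "adj (swap12 m n x) (swap12 m n y)"
    then have "adj (swap12 m n (swap12 m n x)) (swap12 m n (swap12 m n y))"
      using swap12_adj[OF swap12_in_V[OF x] swap12_in_V[OF y]] by simp
    then show "adj x y" using swap12_involution x y by simp
  qed (rule swap12_adj[OF x y])
  ultimately show ?thesis by (simp add: SR_Aut_def Bij_def swap12_def)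
qed

lemma swap12_corner: "i < m \<Longrightarrow> swap12 m n (corner i) = corner i"
  using swap12_apply[OF corner_in_V] n3 unfolding corner_def by simp

lemma swap12_pair_vert:
  assumes ij: "i < m" "j < m" "i \<noteq> j" and u: "0 < u" "u < n"
  shows "swap12 m n (pair_vert i j u) = pair_vert i j (3 - u)"
proof -
  have u12: "u = 1 \<or> u = 2" using u n3 by auto
  then have "\<exists>k. pair_vert i j u k = 2" using ij n3 unfolding pair_vert_def by auto
  then have "swap12 m n (pair_vert i j u) = (\<lambda>k. swap_digit (pair_vert i j u k))"
    using swap12_apply[OF pair_vert_in_V[OF ij]] u by simp
  also have "\<dots> = pair_vert i j (3 - u)"
    using u12 n3 unfolding pair_vert_def swap_digit_def by auto
  finally show ?thesis .
qed

end

end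

section \<open>The permutation induced on the lines\<close>

locale SR_corner_fixing = SR_graph +
  fixes g
  assumes g_aut: "g \<in> SR_Aut m n" and g_corner: "\<And>i. i < m \<Longrightarrow> g (corner i) = corner i"
begin

definition line_map :: "nat \<Rightarrow> nat \<Rightarrow> nat \<Rightarrow> nat" where
  "line_map i j u = (SOME v. 0 < v \<and> v < n \<and> g (pair_vert i j u) = pair_vert i j v)"

lemma line_map:
  assumes "i < m" "j < m" "i \<noteq> j" "0 < u" "u < n"
  shows "0 < line_map i j u" "line_map i j u < n" "g (pair_vert i j u) = pair_vert i j (line_map i j u)"
proof -
  have "\<exists>v. 0 < v \<and> v < n \<and> g (pair_vert i j u) = pair_vert i j v"
    using SR_Aut_pair_vert[OF g_aut g_corner assms] by blast
  from someI_ex[OF this] show "0 < line_map i j u" "line_map i j u < n"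
    "g (pair_vert i j u) = pair_vert i j (line_map i j u)" unfolding line_map_def by blast+
qed

lemma line_map_change_end:
  assumes "i < m" "j < m" "k < m" "i \<noteq> j" "i \<noteq> k" "j \<noteq> k" "0 < u" "u < n"
  shows "line_map i j u = line_map i k u"
proof -
  have "adj (pair_vert i j u) (pair_vert i k u)" using pair_vert_adj_iff[of i j k u u] assms by simp
  moreover have "pair_vert i j u \<in> V" "pair_vert i k u \<in> V" using pair_vert_in_V assms by auto
  ultimately have "adj (g (pair_vert i j u)) (g (pair_vert i k u))"
    using SR_Aut_adj_iff[OF g_aut] by blast
  then have "adj (pair_vert i j (line_map i j u)) (pair_vert i k (line_map i k u))"
    using line_map(3)[of i j u] line_map(3)[of i k u] assms by simp
  then show ?thesis
    using pair_vert_adj_iff[of i j k "line_map i j u" "line_map i k u"] line_map(2)[of i j u]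
      line_map(2)[of i k u] assms by auto
qed

lemma line_map_swap:
  assumes "i < m" "j < m" "i \<noteq> j" "0 < u" "u < n"
  shows "line_map j i (n - u) = n - line_map i j u"
proof -
  have e: "pair_vert j i (n - u) = pair_vert i j u" using pair_vert_swap assms by simp
  have 1: "g (pair_vert j i (n - u)) = pair_vert j i (line_map j i (n - u))"
    using line_map(3)[of j i "n - u"] assms by simp
  have 2: "g (pair_vert i j u) = pair_vert i j (line_map i j u)" using line_map(3)[of i j u] assms by simp
  have "pair_vert i j (line_map i j u) = pair_vert j i (n - line_map i j u)"
    using pair_vert_swap[of i j "line_map i j u"] line_map(2)[of i j u] assms by simp
  then have "pair_vert j i (line_map j i (n - u)) = pair_vert j i (n - line_map i j u)" using 1 2 e by simp
  then show ?thesis using pair_vert_eq_iff assms(3) by simp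
qed

lemma line_map_change_start:
  assumes "i < m" "j < m" "k < m" "i \<noteq> j" "i \<noteq> k" "j \<noteq> k" "0 < u" "u < n"
  shows "line_map i j u = line_map k j u"
proof -
  have 1: "line_map j i (n - u) = n - line_map i j u" using line_map_swap[of i j u] assms by simp
  have 2: "line_map j k (n - u) = n - line_map k j u" using line_map_swap[of k j u] assms by simp
  have 3: "line_map j i (n - u) = line_map j k (n - u)" using line_map_change_end[of j i k "n - u"] assms by simp
  have "line_map i j u < n" "line_map k j u < n" using line_map(2)[of i j u] line_map(2)[of k j u] assms by auto
  then show ?thesis using 1 2 3 by simp
qed

definition phi :: "nat \<Rightarrow> nat" where
  "phi u = line_map 0 1 u"

lemma line_map_eq_phi:
  assumes ij: "i < m" "j < m" "i \<noteq> j" and u: "0 < u" "u < n"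
  shows "line_map i j u = phi u"
proof -
  have m1: "0 < m" "1 < m" using m_gt_2 by auto
  have from_0: "line_map 0 j u = phi u" if "j < m" "j \<noteq> 0" for j
    using line_map_change_end[of 0 j 1 u] m1 u that unfolding phi_def by (cases "j = 1") auto
  show ?thesis
  proof (cases "i = 0")
    case False
    show ?thesis
    proof (cases "j = 0")
      case False
      then show ?thesis using line_map_change_start[of i j 0 u] from_0[of j] ij u m1 \<open>i \<noteq> 0\<close> by simp
    next
      case True
      obtain k where k: "k < m" "k \<noteq> i" "k \<noteq> 0" using ex_third[OF ij(1) m1(1)] by blast
      have "line_map i 0 u = line_map i k u" using line_map_change_end[of i 0 k u] k ij u m1 \<open>i \<noteq> 0\<close> by simp
      also have "\<dots> = line_map 0 k u" using line_map_change_start[of i k 0 u] k ij u m1 \<open>i \<noteq> 0\<close> by simp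
      finally show ?thesis using True from_0[of k] k by simp
    qed
  qed (use from_0 ij in simp)
qed

lemma g_pair_vert:
  assumes "i < m" "j < m" "i \<noteq> j" "0 < u" "u < n"
  shows "g (pair_vert i j u) = pair_vert i j (phi u)" "0 < phi u" "phi u < n"
  using line_map[OF assms] line_map_eq_phi[OF assms] by auto

lemma phi_eq_iff:
  assumes "0 < u" "u < n" "0 < v" "v < n"
  shows "phi u = phi v \<longleftrightarrow> u = v"
proof
  have m1: "0 < m" "1 < m" "(0::nat) \<noteq> 1" using m_gt_2 by auto
  assume "phi u = phi v"
  then have "g (pair_vert 0 1 u) = g (pair_vert 0 1 v)" using g_pair_vert(1)[OF m1] assms by simp
  then have "pair_vert 0 1 u = pair_vert 0 1 v"
    using SR_Aut_eq_iff[OF g_aut] pair_vert_in_V[OF m1] assms by simp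
  then show "u = v" using pair_vert_eq_iff[OF m1(3)] by blast
qed simp

lemma g_coord_cases:
  assumes a: "adj x (pair_vert i j u)" and x: "x \<in> V" and ij: "i < m" "j < m" "i \<noteq> j"
    and u: "0 < u" "u < n" and nl: "\<not> on_line x i j"
  shows "g x i = phi u \<or> g x j = n - phi u"
proof (rule ccontr)
  assume c: "\<not> ?thesis"
  obtain r where r: "r < m" "r \<noteq> i" "r \<noteq> j" "g x r \<noteq> 0"
    using nl SR_Aut_on_line_back[OF g_aut g_corner x ij] unfolding on_line_def by blast
  have "adj (g x) (pair_vert i j (phi u))"
    using SR_Aut_adj_iff[OF g_aut x pair_vert_in_V[OF ij less_imp_le[OF u(2)]]] a g_pair_vert(1)[OF ij u]
    by simp
  then show False
    by (rule SR_adj_no_three_diffs[of _ _ _ i j r]) (use ij r c in \<open>auto simp: pair_vert_def\<close>)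
qed

text \<open>The vertex \<open>a e\<^sub>0 + b e\<^sub>1 + c e\<^sub>2\<close> is adjacent to \<open>pair_vert 0 1 u\<close> for \<open>u \<in> {a + c, a}\<close>, to
  \<open>pair_vert 0 2 u\<close> for \<open>u \<in> {a + b, a}\<close> and to \<open>pair_vert 1 2 b\<close>; the coordinates of its image are
  constrained accordingly, and they sum to at most \<open>n\<close>.\<close>

lemma phi_superadditive:
  assumes a: "1 \<le> a" and b: "1 \<le> b" and ab: "a + b < n" and bc: "b \<noteq> n - a - b"
  shows "phi a + phi b \<le> phi (a + b)"
proof -
  define c where "c = n - a - b"
  have c: "1 \<le> c" "a + b + c = n" "b \<noteq> c" using ab bc by (auto simp: c_def)
  have m2: "0 < m" "1 < m" "2 < m" using m_gt_2 by auto
  define x where "x = (pair_vert 0 1 a)(1 := b, 2 := c)"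
  have xV: "x \<in> V" unfolding x_def
    using pair_vert_in_V[of 0 1 a] m2 c ab by (intro SR_verts_upd2) (auto simp: pair_vert_def)
  have x012: "x 0 = a" "x 1 = b" "x 2 = c" by (auto simp: x_def pair_vert_def)
  have x3: "\<And>t. t \<noteq> 0 \<Longrightarrow> t \<noteq> 1 \<Longrightarrow> t \<noteq> 2 \<Longrightarrow> x t = 0" by (auto simp: x_def pair_vert_def)
  have nl01: "\<not> on_line x 0 1" using x012 c m2 by (auto simp: on_line_def intro!: exI[of _ 2])
  have nl02: "\<not> on_line x 0 2" using x012 b m2 by (auto simp: on_line_def intro!: exI[of _ 1])
  have nl12: "\<not> on_line x 1 2" using x012 a m2 by (auto simp: on_line_def intro!: exI[of _ 0])
  let ?y = "g x"
  have "adj x (pair_vert 0 1 (a + c))"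
    by (rule SR_adjI[where a=0 and b=2]) (use x012 x3 c m2 in \<open>auto simp: pair_vert_def\<close>)
  then have C1: "?y 0 = phi (a + c) \<or> ?y 1 = n - phi (a + c)"
    by (rule g_coord_cases[OF _ xV m2(1,2) _ _ _ nl01]) (use a b c in auto)
  have "adj x (pair_vert 0 1 a)"
    by (rule SR_adjI[where a=1 and b=2]) (use x012 x3 c m2 in \<open>auto simp: pair_vert_def\<close>)
  then have C2: "?y 0 = phi a \<or> ?y 1 = n - phi a"
    by (rule g_coord_cases[OF _ xV m2(1,2) _ _ _ nl01]) (use a b c in auto)
  have "adj x (pair_vert 0 2 (a + b))"
    by (rule SR_adjI[where a=0 and b=1]) (use x012 x3 c b m2 in \<open>auto simp: pair_vert_def\<close>)
  then have C3: "?y 0 = phi (a + b) \<or> ?y 2 = n - phi (a + b)"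
    by (rule g_coord_cases[OF _ xV m2(1,3) _ _ _ nl02]) (use a b c in auto)
  have "adj x (pair_vert 0 2 a)"
    by (rule SR_adjI[where a=1 and b=2]) (use x012 x3 c b m2 in \<open>auto simp: pair_vert_def\<close>)
  then have C4: "?y 0 = phi a \<or> ?y 2 = n - phi a"
    by (rule g_coord_cases[OF _ xV m2(1,3) _ _ _ nl02]) (use a b c in auto)
  have "adj x (pair_vert 1 2 b)"
    by (rule SR_adjI[where a=0 and b=2]) (use x012 x3 c a m2 in \<open>auto simp: pair_vert_def\<close>)
  then have C5: "?y 1 = phi b \<or> ?y 2 = n - phi b"
    by (rule g_coord_cases[OF _ xV m2(2,3) _ _ _ nl12]) (use a b c in auto)
  have sum: "?y 0 + ?y 1 + ?y 2 \<le> n"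
    using SR_verts_triple_le[OF SR_Aut_in_SR_verts[OF g_aut xV]] m2 by simp
  have lt: "phi (a + c) < n" "phi a < n" "phi (a + b) < n" "phi b < n"
    using g_pair_vert(3)[OF m2(1,2)] a b c by auto
  have ne: "phi a \<noteq> phi (a + c)" "phi a \<noteq> phi (a + b)" "phi b \<noteq> phi (a + b)"
    "phi (a + b) \<noteq> phi (a + c)"
    using phi_eq_iff[of a "a + c"] phi_eq_iff[of a "a + b"] phi_eq_iff[of b "a + b"]
      phi_eq_iff[of "a + b" "a + c"] a b c by auto
  show ?thesis
  proof (cases "?y 0 = phi a")
    case True
    then have "?y 1 = n - phi (a + c)" "?y 2 = n - phi (a + b)" using C1 C3 ne by auto
    moreover from this have "?y 1 = phi b" using C5 lt ne by auto
    ultimately show ?thesis using True sum lt by linarith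
  next
    case False
    then have "?y 1 = n - phi a" "?y 2 = n - phi a" using C2 C4 by auto
    then have "?y 0 = phi (a + c)" "?y 0 = phi (a + b)" using C1 C3 lt ne by auto
    then show ?thesis using ne by simp
  qed
qed

lemma increasing_bounded_eq_id:
  fixes f :: "nat \<Rightarrow> nat"
  assumes step: "\<And>k. 1 \<le> k \<Longrightarrow> k < N \<Longrightarrow> f k + 1 \<le> f (Suc k)"
    and f1: "1 \<le> f 1" and fN: "f N \<le> N" and k: "1 \<le> k" "k \<le> N"
  shows "f k = k"
proof -
  have lower: "k \<le> f k" if "1 \<le> k" "k \<le> N" for k
    using that
  proof (induction k)
    case (Suc k)
    then show ?case using f1 step[of k] by (cases "k = 0") auto
  qed simp
  have upper: "f k + d \<le> f (k + d)" if "k + d \<le> N" for d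
    using that
  proof (induction d)
    case (Suc d)
    then show ?case using step[of "k + d"] k by simp
  qed simp
  show ?thesis using upper[of "N - k"] lower[OF k] fN k by simp
qed

lemma phi_eq_id:
  assumes n4: "3 < n" and u: "0 < u" "u < n"
  shows "phi u = u"
proof (rule increasing_bounded_eq_id[where N = "n - 1"])
  have m1: "0 < m" "1 < m" "(0::nat) \<noteq> 1" using m_gt_2 by auto
  show "1 \<le> phi 1" "phi (n - 1) \<le> n - 1"
    using g_pair_vert(2)[OF m1, of 1] g_pair_vert(3)[OF m1, of "n - 1"] n_gt_2 by auto
  fix k assume k: "1 \<le> k" "k < n - 1"
  have "phi k + phi 1 \<le> phi (Suc k)"
  proof (cases "1 = n - k - 1")
    case False
    then show ?thesis using phi_superadditive[of k 1] k by auto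
  next
    case True
    then have "k \<noteq> n - 1 - k" using n4 by auto
    then show ?thesis using phi_superadditive[of 1 k] k by (auto simp: add.commute)
  qed
  then show "phi k + 1 \<le> phi (Suc k)" using \<open>1 \<le> phi 1\<close> by simp
qed (use u in auto)

lemma g_eq_id:
  assumes n4: "3 < n" and x: "x \<in> V"
  shows "g x = x"
proof (rule SR_Aut_fixing_lines[OF g_aut g_corner _ x])
  fix i j u assume "i < m" "j < m" "i \<noteq> j" "0 < u" "u < n"
  then show "g (pair_vert i j u) = pair_vert i j u" using g_pair_vert(1) phi_eq_id[OF n4] by simp
qed

lemma g_cases_n3:
  assumes n3: "n = 3"
  shows "(\<forall>x\<in>V. g x = x) \<or> (\<forall>x\<in>V. g x = swap12 m n x)"
proof -
  have m1: "0 < m" "1 < m" "(0::nat) \<noteq> 1" using m_gt_2 by auto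
  have phi_range: "phi u \<in> {1, 2}" if "u \<in> {1, 2}" for u
    using g_pair_vert(2,3)[OF m1, of u] that n3 by auto
  have "phi 1 \<noteq> phi 2" using phi_eq_iff[of 1 2] n3 by simp
  then consider "phi 1 = 1" "phi 2 = 2" | "phi 1 = 2" "phi 2 = 1"
    using phi_range[of 1] phi_range[of 2] by auto
  then show ?thesis
  proof cases
    case 1
    have "g (pair_vert i j u) = pair_vert i j u"
      if "i < m" "j < m" "i \<noteq> j" "0 < u" "u < n" for i j u
    proof -
      have "u = 1 \<or> u = 2" using that(4,5) n3 by auto
      then show ?thesis using g_pair_vert(1)[OF that] 1 by auto
    qed
    then show ?thesis using SR_Aut_fixing_lines[OF g_aut g_corner] by blast
  next
    case 2
    let ?s = "swap12 m n"
    let ?h = "compose V g ?s"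
    have h: "?h \<in> SR_Aut m n" using SR_Aut_compose[OF g_aut swap12_in_SR_Aut[OF n3]] .
    have hc: "?h (corner i) = corner i" if "i < m" for i
      using swap12_corner[OF n3 that] g_corner[OF that] corner_in_V[OF that] by (simp add: compose_def)
    have hp: "?h (pair_vert i j u) = pair_vert i j u"
      if "i < m" "j < m" "i \<noteq> j" "0 < u" "u < n" for i j u
    proof -
      have "u = 1 \<or> u = 2" using that n3 by auto
      then have "phi (3 - u) = u" using 2 by auto
      moreover have "?h (pair_vert i j u) = g (pair_vert i j (3 - u))"
        using swap12_pair_vert[OF n3 that] pair_vert_in_V that by (simp add: compose_def)
      ultimately show ?thesis using g_pair_vert(1)[of i j "3 - u"] that n3 by simp
    qed
    have "g x = ?s x" if x: "x \<in> V" for x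
    proof -
      have "?h (?s x) = ?s x" using SR_Aut_fixing_lines[OF h hc hp swap12_in_V[OF n3 x]] .
      then show ?thesis using swap12_involution[OF n3 x] swap12_in_V[OF n3 x] by (simp add: compose_def)
    qed
    then show ?thesis by blast
  qed
qed

end

context SR_graph
begin

lemma coord_perm_corner:
  assumes s: "\<sigma> permutes {..<m}" and i: "i < m"
  shows "coord_perm m n \<sigma> (corner i) = corner (\<sigma> i)"
proof -
  have "\<And>k. inv_into UNIV \<sigma> k = i \<longleftrightarrow> k = \<sigma> i" using permutes_inverses[OF s] by metis
  then show ?thesis unfolding coord_perm_apply[OF corner_in_V[OF i]] by (auto simp: corner_def)
qed

lemma coord_perm_inj:
  assumes s: "\<sigma> permutes {..<m}" and t: "\<tau> permutes {..<m}"
    and e: "\<And>i. i < m \<Longrightarrow> coord_perm m n \<sigma> (corner i) = coord_perm m n \<tau> (corner i)"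
  shows "\<sigma> = \<tau>"
proof
  fix i show "\<sigma> i = \<tau> i"
  proof (cases "i < m")
    case True
    then have "corner (\<sigma> i) = corner (\<tau> i)"
      using e[OF True] coord_perm_corner[OF s True] coord_perm_corner[OF t True] by simp
    then show ?thesis by (rule corner_inj)
  qed (use permutes_not_in[OF s] permutes_not_in[OF t] in simp)
qed

lemma card_coord_perms: "card (coord_perms m n) = fact m"
proof -
  have "inj_on (coord_perm m n) {\<sigma>. \<sigma> permutes {..<m}}"
    using coord_perm_inj by (auto simp: inj_on_def)
  then have "card (coord_perms m n) = card {\<sigma>. \<sigma> permutes {..<m}}"
    unfolding coord_perms_eq_image by (rule card_image)
  also have "\<dots> = fact m" by (rule card_permutations) auto
  finally show ?thesis .
qed

lemma SR_Aut_corner_perm: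
  assumes f: "f \<in> SR_Aut m n"
  obtains \<sigma> where "\<sigma> permutes {..<m}" "\<And>i. i < m \<Longrightarrow> f (corner i) = corner (\<sigma> i)"
proof -
  define \<sigma> where "\<sigma> i = (if i < m then (SOME j. j < m \<and> f (corner i) = corner j) else i)" for i
  have \<sigma>: "\<sigma> i < m \<and> f (corner i) = corner (\<sigma> i)" if "i < m" for i
    unfolding \<sigma>_def using that someI_ex[of "\<lambda>j. j < m \<and> f (corner i) = corner j"] SR_Aut_corner[OF f that]
    by auto
  have "inj_on \<sigma> {..<m}"
  proof (rule inj_onI)
    fix i j assume "i \<in> {..<m}" "j \<in> {..<m}" "\<sigma> i = \<sigma> j"
    then have "f (corner i) = f (corner j)" using \<sigma> by auto
    then have "corner i = corner j" using SR_Aut_eq_iff[OF f corner_in_V corner_in_V] \<open>i \<in> _\<close> \<open>j \<in> _\<close> by auto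
    then show "i = j" by (rule corner_inj)
  qed
  moreover from this have "\<sigma> ` {..<m} = {..<m}" using \<sigma> by (intro endo_inj_surj) auto
  ultimately have "\<sigma> permutes {..<m}"
    by (intro bij_imp_permutes) (auto simp: bij_betw_def \<sigma>_def)
  then show thesis using that \<sigma> by blast
qed

lemma SR_Aut_factor:
  assumes f: "f \<in> SR_Aut m n"
  obtains \<sigma> g where "\<sigma> permutes {..<m}" "SR_corner_fixing m n g"
    "\<And>x. x \<in> V \<Longrightarrow> f x = coord_perm m n \<sigma> (g x)"
proof -
  obtain \<sigma> where s: "\<sigma> permutes {..<m}" and fc: "\<And>i. i < m \<Longrightarrow> f (corner i) = corner (\<sigma> i)"
    using SR_Aut_corner_perm[OF f] by blast
  let ?t = "inv_into UNIV \<sigma>"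
  have t: "?t permutes {..<m}" using permutes_inv[OF s] .
  let ?g = "compose V (coord_perm m n ?t) f"
  have "?g \<in> SR_Aut m n" using SR_Aut_compose[OF coord_perm_in_SR_Aut[OF t] f] .
  moreover have "?g (corner i) = corner i" if "i < m" for i
    using fc[OF that] corner_in_V[OF that] coord_perm_corner[OF t] permutes_in_image[OF s] that
      permutes_inverses(2)[OF s] by (simp add: compose_def)
  ultimately have "SR_corner_fixing m n ?g" by unfold_locales (use m_gt_2 n_gt_2 in auto)
  moreover have "f x = coord_perm m n \<sigma> (?g x)" if "x \<in> V" for x
    using coord_perm_inv(2)[OF s SR_Aut_in_SR_verts[OF f that]] that by (simp add: compose_def)
  ultimately show thesis using that s by blast
qed

lemma SR_Aut_eqI:
  assumes "f \<in> SR_Aut m n" "h \<in> SR_Aut m n" "\<And>x. x \<in> V \<Longrightarrow> f x = h x"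
  shows "f = h"
  using assms SR_Aut_extensional by (metis extensionalityI)

lemma SR_Aut_eq_coord_perms:
  assumes "3 < n"
  shows "SR_Aut m n = coord_perms m n"
proof
  show "SR_Aut m n \<subseteq> coord_perms m n"
  proof
    fix f assume f: "f \<in> SR_Aut m n"
    then obtain \<sigma> g where s: "\<sigma> permutes {..<m}" and G: "SR_corner_fixing m n g"
      and fg: "\<And>x. x \<in> V \<Longrightarrow> f x = coord_perm m n \<sigma> (g x)" by (rule SR_Aut_factor) blast
    have "f x = coord_perm m n \<sigma> x" if "x \<in> V" for x
      using fg[OF that] SR_corner_fixing.g_eq_id[OF G assms that] by simp
    then have "f = coord_perm m n \<sigma>" using SR_Aut_eqI[OF f coord_perm_in_SR_Aut[OF s]] by blast
    then show "f \<in> coord_perms m n" using s by (auto simp: coord_perms_def)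
  qed
qed (rule coord_perms_subset_SR_Aut)

context
  assumes n3: "n = 3"
begin

abbreviation "swapped \<equiv> (\<lambda>h. compose V h (swap12 m n)) ` coord_perms m n"

lemma SR_Aut_eq_coord_perms_Un_swapped: "SR_Aut m n = coord_perms m n \<union> swapped"
proof
  show "SR_Aut m n \<subseteq> coord_perms m n \<union> swapped"
  proof
    fix f assume f: "f \<in> SR_Aut m n"
    then obtain \<sigma> g where s: "\<sigma> permutes {..<m}" and G: "SR_corner_fixing m n g"
      and fg: "\<And>x. x \<in> V \<Longrightarrow> f x = coord_perm m n \<sigma> (g x)" by (rule SR_Aut_factor) blast
    have cp: "coord_perm m n \<sigma> \<in> coord_perms m n" using s by (auto simp: coord_perms_def)
    from SR_corner_fixing.g_cases_n3[OF G n3] show "f \<in> coord_perms m n \<union> swapped"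
    proof
      assume "\<forall>x\<in>V. g x = x"
      then have "f = coord_perm m n \<sigma>" using SR_Aut_eqI[OF f coord_perm_in_SR_Aut[OF s]] fg by simp
      then show ?thesis using cp by simp
    next
      assume "\<forall>x\<in>V. g x = swap12 m n x"
      then have "f = compose V (coord_perm m n \<sigma>) (swap12 m n)"
        using SR_Aut_eqI[OF f SR_Aut_compose[OF coord_perm_in_SR_Aut[OF s] swap12_in_SR_Aut[OF n3]]] fg
        by (simp add: compose_def)
      then show ?thesis using cp by blast
    qed
  qed
  show "coord_perms m n \<union> swapped \<subseteq> SR_Aut m n"
    using coord_perms_subset_SR_Aut[of m n] SR_Aut_compose[OF _ swap12_in_SR_Aut[OF n3]] by blast
qed

lemma SR_Aut_eq_generate: "SR_Aut m n = generate (BijGroup V) (insert (swap12 m n) (coord_perms m n))"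
proof
  let ?G = "generate (BijGroup V) (insert (swap12 m n) (coord_perms m n))"
  show "?G \<subseteq> SR_Aut m n"
    by (rule group.generate_subgroup_incl[OF group_BijGroup _ SR_Aut_subgroup])
       (use coord_perms_subset_SR_Aut swap12_in_SR_Aut[OF n3] in auto)
  have "compose V h (swap12 m n) \<in> ?G" if h: "h \<in> coord_perms m n" for h
  proof -
    have "h \<in> Bij V" "swap12 m n \<in> Bij V"
      using h coord_perms_subset_SR_Aut swap12_in_SR_Aut[OF n3] by (auto simp: SR_Aut_def)
    then have "compose V h (swap12 m n) = h \<otimes>\<^bsub>BijGroup V\<^esub> swap12 m n" by (simp add: BijGroup_def)
    moreover have "h \<in> ?G" "swap12 m n \<in> ?G" using h by (auto intro: generate.incl)
    ultimately show ?thesis by (simp add: generate.eng)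
  qed
  then show "SR_Aut m n \<subseteq> ?G"
    unfolding SR_Aut_eq_coord_perms_Un_swapped by (auto intro: generate.incl)
qed

lemma swapped_disjoint: "coord_perms m n \<inter> swapped = {}"
proof -
  have m1: "0 < m" "1 < m" "(0::nat) \<noteq> 1" using m_gt_2 by auto
  have "compose V (coord_perm m n \<sigma>) (swap12 m n) \<noteq> coord_perm m n \<tau>"
    if s: "\<sigma> permutes {..<m}" and t: "\<tau> permutes {..<m}" for \<sigma> \<tau>
  proof
    assume e: "compose V (coord_perm m n \<sigma>) (swap12 m n) = coord_perm m n \<tau>"
    have "coord_perm m n \<sigma> (corner i) = coord_perm m n \<tau> (corner i)" if "i < m" for i
      using fun_cong[OF e, of "corner i"] swap12_corner[OF n3 that] corner_in_V[OF that]
      by (simp add: compose_def)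
    then have "\<sigma> = \<tau>" by (rule coord_perm_inj[OF s t])
    let ?x = "pair_vert 0 1 1"
    have xV: "?x \<in> V" using pair_vert_in_V[OF m1] n3 by simp
    have "coord_perm m n \<sigma> (swap12 m n ?x) = coord_perm m n \<sigma> ?x"
      using fun_cong[OF e, of ?x] xV \<open>\<sigma> = \<tau>\<close> by (simp add: compose_def)
    then have "coord_perm m n (inv_into UNIV \<sigma>) (coord_perm m n \<sigma> (swap12 m n ?x)) = ?x"
      using coord_perm_inv(1)[OF s xV] by simp
    then have "swap12 m n ?x = ?x" using coord_perm_inv(1)[OF s swap12_in_V[OF n3 xV]] by simp
    moreover have "swap12 m n ?x = pair_vert 0 1 2" using swap12_pair_vert[OF n3 m1, of 1] n3 by simp
    ultimately show False using pair_vert_eq_iff[OF m1(3)] by simp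
  qed
  then show ?thesis by (auto simp: coord_perms_def)
qed

lemma card_swapped: "card swapped = fact m"
proof -
  have "inj_on (\<lambda>h. compose V h (swap12 m n)) (coord_perms m n)"
  proof (rule inj_onI)
    fix h h' assume hh': "h \<in> coord_perms m n" "h' \<in> coord_perms m n"
      and e: "compose V h (swap12 m n) = compose V h' (swap12 m n)"
    have "h x = h' x" if x: "x \<in> V" for x
      using fun_cong[OF e, of "swap12 m n x"] swap12_in_V[OF n3 x] swap12_involution[OF n3 x]
      by (simp add: compose_def)
    then show "h = h'" using SR_Aut_eqI hh' coord_perms_subset_SR_Aut by blast
  qed
  then show ?thesis using card_coord_perms by (simp add: card_image)
qed

lemma card_SR_Aut_n3: "card (SR_Aut m n) = 2 * fact m"
  using card_Un_disjoint[OF finite_coord_perms finite_imageI[OF finite_coord_perms] swapped_disjoint]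
  unfolding SR_Aut_eq_coord_perms_Un_swapped card_swapped card_coord_perms by simp

end

end

theorem proposition7:
  fixes m n :: nat
  assumes "m > 2" and "n > 2"
  shows "(n > 3 \<longrightarrow> SR_Aut m n = coord_perms m n \<and> card (SR_Aut m n) = fact m)
       \<and> (n = 3 \<longrightarrow> SR_Aut m n = generate (BijGroup (SR_verts m n)) (insert (swap12 m n) (coord_perms m n))
                    \<and> card (SR_Aut m n) = 2 * fact m)"
proof -
  interpret SR_graph m n using assms by unfold_locales
  show ?thesis
    using SR_Aut_eq_coord_perms card_coord_perms SR_Aut_eq_generate card_SR_Aut_n3 by simp
qed

end
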